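(* Let $\mathcal{T}$ be an $l$-eligible microdata table, and run Phase One of the algorithm described in the context, obtaining $\dot{Q}_1,\dots,\dot{Q}_s,\dot{R}$. If $\dot{R}$ is $l$-eligible, then $(\dot{Q}_1,\dots,\dot{Q}_s,\dot{R})$ is an optimal solution of the reformulated tuple minimization problem, i.e., $|\dot{R}| = OPT$.
   Context: A microdata table $\mathcal{T}$ is a multiset of $n$ tuples, each with values on $d$ quasi-identifier (QI) attributes and one sensitive attribute (SA). For a multiset $Q$ of tuples and SA value $v$, $h(Q,v)$ is the number of tuples of $Q$ with SA value $v$, $h(Q)=\max_v h(Q,v)$, and the pillars of $Q$ are the SA values $v$ with $h(Q,v)=h(Q)$. $Q$ is $l$-eligible if $|Q|\ge l\cdot h(Q)$. Partition $\mathcal{T}$ into $Q_1,\dots,Q_s$, the maximal classes of tuples having identical values on all QI attributes. Reformulated tuple minimization: choose sub-multisets $Q'_i\subseteq Q_i$ and let $R'=\mathcal{T}\setminus\bigcup_i Q'_i$, such that every $Q'_i$ and $R'$ are $l$-eligible, minimizing $|R'|$; $OPT$ denotes the minimum value. Phase One: start with $R=\emptyset$; for each $i$, while $Q_i$ is not $l$-eligible, move one tuple whose SA value is a pillar of $Q_i$ from $Q_i$ to $R$ (ties arbitrary). $\dot{Q}_1,\dots,\dot{Q}_s,\dot{R}$ denote the resulting multisets. *)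

theory Defs
  imports Main "HOL-Library.Multiset"
begin

text \<open>A tuple is a pair (QI-vector, SA value); a table is a multiset of tuples.\<close>

definition hv :: "('q \<times> 's) multiset \<Rightarrow> 's \<Rightarrow> nat" where
  "hv Q v = size (filter_mset (\<lambda>t. snd t = v) Q)"

definition hmax :: "('q \<times> 's) multiset \<Rightarrow> nat" where
  "hmax Q = Max (insert 0 (hv Q ` (snd ` set_mset Q)))"

definition pillar :: "('q \<times> 's) multiset \<Rightarrow> 's \<Rightarrow> bool" where
  "pillar Q v \<longleftrightarrow> hv Q v = hmax Q"

definition eligible :: "nat \<Rightarrow> ('q \<times> 's) multiset \<Rightarrow> bool" where
  "eligible l Q \<longleftrightarrow> l * hmax Q \<le> size Q"

definition QIs :: "('q \<times> 's) multiset \<Rightarrow> 'q set" where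
  "QIs T = fst ` set_mset T"

definition cls :: "('q \<times> 's) multiset \<Rightarrow> 'q \<Rightarrow> ('q \<times> 's) multiset" where
  "cls T q = filter_mset (\<lambda>t. fst t = q) T"

definition is_solution ::
  "nat \<Rightarrow> ('q \<times> 's) multiset \<Rightarrow> ('q \<Rightarrow> ('q \<times> 's) multiset) \<Rightarrow> ('q \<times> 's) multiset \<Rightarrow> bool" where
  "is_solution l T Q' R' \<longleftrightarrow>
     (\<forall>q\<in>QIs T. Q' q \<subseteq># cls T q \<and> eligible l (Q' q)) \<and>
     R' = T - (\<Sum>q\<in>QIs T. Q' q) \<and> eligible l R'"

definition OPT :: "nat \<Rightarrow> ('q \<times> 's) multiset \<Rightarrow> nat" where
  "OPT l T = (LEAST k. \<exists>Q' R'. is_solution l T Q' R' \<and> size R' = k)"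

inductive phase1_step :: "nat \<Rightarrow> ('q \<times> 's) multiset \<times> ('q \<times> 's) multiset
    \<Rightarrow> ('q \<times> 's) multiset \<times> ('q \<times> 's) multiset \<Rightarrow> bool" where
  "\<not> eligible l Q \<Longrightarrow> t \<in># Q \<Longrightarrow> pillar Q (snd t) \<Longrightarrow>
     phase1_step l (Q, R) (Q - {#t#}, R + {#t#})"

definition phase1_class :: "nat \<Rightarrow> ('q \<times> 's) multiset \<Rightarrow> ('q \<times> 's) multiset
    \<Rightarrow> ('q \<times> 's) multiset \<Rightarrow> bool" where
  "phase1_class l Q Qd Rd \<longleftrightarrow> (phase1_step l)\<^sup>*\<^sup>* (Q, {#}) (Qd, Rd) \<and> eligible l Qd"

end

theory Submission
  imports Defs
begin

text \<open>Phase One on a class never loses an eligible sub-multiset of maximum size.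
  Suppose \<open>Q''\<close> is eligible inside the current class \<open>Q\<close> and \<open>Q\<close> is not eligible.
  Then \<open>h(Q'') < h(Q)\<close>, so \<open>Q''\<close> has strictly fewer tuples than \<open>Q\<close> carrying the
  pillar value \<open>v\<close> of the removed tuple \<open>t\<close>; if \<open>Q''\<close> needs every copy of \<open>t\<close>, it can
  exchange one of them for another tuple of \<open>Q\<close> with SA value \<open>v\<close>, which changes neither
  its histogram nor its size. Hence what Phase One leaves of a class is a largest eligible sub-multiset of
  it, and when the removed tuples form an eligible remainder no feasible solution can keep more
  tuples.\<close>

lemma hv_le_hmax: "hv Q v \<le> hmax Q"
proof (cases "hv Q v = 0")
  case False
  then have "v \<in> snd ` set_mset Q"
    unfolding hv_def by (metis (mono_tags, lifting) filter_mset_eq_mempty_iff image_eqI size_empty)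
  then show ?thesis unfolding hmax_def by (intro Max_ge) auto
qed simp

lemma hmax_cong:
  assumes "\<And>v. hv Q1 v = hv Q2 v"
  shows "hmax Q1 = hmax Q2"
proof -
  have sa_values: "snd ` set_mset Q = {v. hv Q v > 0}" for Q :: "('q \<times> 's) multiset"
  proof -
    have "hv Q v > 0 \<longleftrightarrow> (\<exists>a. (a, v) \<in># Q)" for v
      unfolding hv_def by (simp add: nonempty_has_size[symmetric])
    moreover have "snd ` set_mset Q = {v. \<exists>a. (a, v) \<in># Q}" by force
    ultimately show ?thesis by simp
  qed
  show ?thesis unfolding hmax_def sa_values using assms by simp
qed

lemma hv_less_obtains_tuple:
  assumes "A \<subseteq># B" and "hv A v < hv B v"
  obtains t where "snd t = v" and "count A t < count B t"
proof (rule ccontr)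
  assume "\<not> thesis"
  with that have "count A t = count B t" if "snd t = v" for t
    using that mset_subset_eq_count[OF assms(1), of t] by fastforce
  then have "filter_mset (\<lambda>t. snd t = v) A = filter_mset (\<lambda>t. snd t = v) B"
    by (intro multiset_eqI) (simp add: count_filter_mset)
  then show False using assms(2) unfolding hv_def by simp
qed

lemma hv_exchange_same_value:
  assumes "t \<in># Q" and "snd t' = snd t"
  shows "hv (Q - {#t#} + {#t'#}) v = hv Q v"
proof (cases "snd t = v")
  case True
  then have "t \<in># filter_mset (\<lambda>x. snd x = v) Q" using assms(1) by simp
  then have "size (filter_mset (\<lambda>x. snd x = v) Q) > 0"
    by (metis gr0I size_eq_0_iff_empty empty_iff set_mset_empty)
  then show ?thesis unfolding hv_def using assms True by (simp add: size_Diff_submset)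
next
  case False
  then show ?thesis unfolding hv_def using assms by (simp add: size_Diff_submset)
qed

lemma eligible_exchange_same_value:
  assumes "t \<in># Q" and "snd t' = snd t" and "eligible l Q"
  shows "eligible l (Q - {#t#} + {#t'#})"
  using assms hmax_cong[OF hv_exchange_same_value[OF assms(1,2)]]
  by (simp add: eligible_def size_Diff_singleton)

lemma eligible_if_submset_hmax_le:
  assumes "Q' \<subseteq># Q" and "eligible l Q'" and "hmax Q \<le> hmax Q'"
  shows "eligible l Q"
proof -
  have "l * hmax Q \<le> l * hmax Q'" using assms(3) by (rule mult_le_mono2)
  also have "\<dots> \<le> size Q'" using assms(2) unfolding eligible_def .
  also have "\<dots> \<le> size Q" using assms(1) by (rule size_mset_mono)
  finally show ?thesis unfolding eligible_def .
qed

lemma eligible_submset_remove_pillar: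
  assumes "\<not> eligible l Q" and "t \<in># Q" and "pillar Q (snd t)"
    and "Q'' \<subseteq># Q" and "eligible l Q''"
  obtains Q''' where "Q''' \<subseteq># Q - {#t#}" and "eligible l Q'''" and "size Q''' = size Q''"
proof (cases "Q'' \<subseteq># Q - {#t#}")
  case True
  then show ?thesis using that assms(5) by blast
next
  case False
  then obtain x where "count (Q - {#t#}) x < count Q'' x"
    by (meson mset_subset_eq_count not_le_imp_less subseteq_mset_def)
  with mset_subset_eq_count[OF assms(4), of x] assms(2)
  have t_all: "count Q'' t = count Q t"
    by (auto split: if_splits)
  with assms(2) have "t \<in># Q''" by (metis count_greater_zero_iff)
  have "hmax Q'' < hmax Q"
    using eligible_if_submset_hmax_le[OF assms(4,5)] assms(1) by fastforce
  then have "hv Q'' (snd t) < hv Q (snd t)"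
    using hv_le_hmax[of Q'' "snd t"] assms(3) unfolding pillar_def by simp
  then obtain t' where t': "snd t' = snd t" "count Q'' t' < count Q t'"
    using hv_less_obtains_tuple[OF assms(4)] by blast
  with t_all have "t' \<noteq> t" by auto
  have "Q'' - {#t#} + {#t'#} \<subseteq># Q - {#t#}"
    unfolding subseteq_mset_def
    using t_all t' \<open>t' \<noteq> t\<close> mset_subset_eq_count[OF assms(4)] by auto
  moreover have "eligible l (Q'' - {#t#} + {#t'#})"
    using eligible_exchange_same_value[OF \<open>t \<in># Q''\<close> t'(1) assms(5)] .
  moreover have "size (Q'' - {#t#} + {#t'#}) = size Q''"
    using \<open>t \<in># Q''\<close> by (metis add_mset_add_single insert_DiffM size_add_mset size_union)
  ultimately show ?thesis using that by blast
qed

lemma phase1_step_moves_tuple: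
  assumes "phase1_step l (Q, R) (Q', R')"
  shows "Q' + R' = Q + R"
  using assms by cases (auto simp: insert_DiffM)

lemma phase1_step_keeps_eligible_size:
  assumes "phase1_step l (Q, R) (Q', R')" and "Q'' \<subseteq># Q" and "eligible l Q''"
  obtains Q''' where "Q''' \<subseteq># Q'" and "eligible l Q'''" and "size Q''' = size Q''"
  using assms(1)
proof cases
  case (1 t)
  then show ?thesis
    using eligible_submset_remove_pillar[OF _ _ _ assms(2,3)] that by metis
qed

lemma phase1_run_invariant:
  assumes "(phase1_step l)\<^sup>*\<^sup>* (Q, R) (Qc, Rc)"
  shows "Qc + Rc = Q + R"
    and "Q' \<subseteq># Q \<Longrightarrow> eligible l Q' \<Longrightarrow> \<exists>Q''. Q'' \<subseteq># Qc \<and> eligible l Q'' \<and> size Q' \<le> size Q''"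
  using assms
proof (induction arbitrary: Q' rule: rtranclp_induct2)
  case (step Qa Ra Qb Rb)
  { case 1
    show ?case using step.IH(1) phase1_step_moves_tuple[OF step.hyps(2)] by simp }
  { case 2
    then obtain Q'' where "Q'' \<subseteq># Qa" "eligible l Q''" "size Q' \<le> size Q''"
      using step.IH(2) by blast
    then show ?case
      using phase1_step_keeps_eligible_size[OF step.hyps(2)] by (metis le_refl) }
qed auto

lemma phase1_class_decomp:
  assumes "phase1_class l Q Qd Rd"
  shows "Qd + Rd = Q"
  using assms phase1_run_invariant(1) unfolding phase1_class_def by fastforce

lemma phase1_class_maximal:
  assumes "phase1_class l Q Qd Rd" and "Q' \<subseteq># Q" and "eligible l Q'"
  shows "size Q' \<le> size Qd"
  using assms phase1_run_invariant(2)[of l Q "{#}" Qd Rd Q'] size_mset_mono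
  unfolding phase1_class_def by fastforce

lemma sum_cls: "(\<Sum>q\<in>QIs T. cls T q) = T"
proof (rule multiset_eqI)
  fix x
  have "count (\<Sum>q\<in>QIs T. cls T q) x = (\<Sum>q\<in>QIs T. if fst x = q then count T x else 0)"
    unfolding count_sum cls_def by (intro sum.cong) auto
  also have "\<dots> = (if fst x \<in> QIs T then count T x else 0)"
    unfolding QIs_def by (simp add: sum.delta)
  also have "\<dots> = count T x"
    unfolding QIs_def by (auto simp: image_iff not_in_iff[symmetric])
  finally show "count (\<Sum>q\<in>QIs T. cls T q) x = count T x" .
qed

lemma size_solution_ge:
  assumes "is_solution l T Q' R'"
  shows "size T - (\<Sum>q\<in>QIs T. size (Q' q)) \<le> size R'"
  using assms diff_size_le_size_Diff unfolding is_solution_def by (metis size_multiset_sum)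

lemma OPT_eqI:
  assumes "is_solution l T Q R" and "\<And>Q' R'. is_solution l T Q' R' \<Longrightarrow> size R \<le> size R'"
  shows "OPT l T = size R"
  unfolding OPT_def using assms by (intro Least_equality) blast+

theorem corollary1:
  fixes T :: "('q \<times> 's) multiset" and l :: nat
    and Qd Rq :: "'q \<Rightarrow> ('q \<times> 's) multiset" and Rd :: "('q \<times> 's) multiset"
  assumes "eligible l T"
    and "\<forall>q\<in>QIs T. phase1_class l (cls T q) (Qd q) (Rq q)"
    and "Rd = (\<Sum>q\<in>QIs T. Rq q)"
    and "eligible l Rd"
  shows "is_solution l T Qd Rd \<and> size Rd = OPT l T"
proof -
  have decomp: "Qd q + Rq q = cls T q" if "q \<in> QIs T" for q
    using assms(2) that phase1_class_decomp by blast
  have T: "T = (\<Sum>q\<in>QIs T. Qd q) + Rd"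
    using sum_cls[of T] decomp assms(3) by (simp add: sum.distrib[symmetric])
  have sol: "is_solution l T Qd Rd"
    using assms(2,4) decomp T unfolding is_solution_def phase1_class_def
    by (metis add_diff_cancel_left' mset_subset_eq_add_left)
  have "size Rd \<le> size R'" if "is_solution l T Q' R'" for Q' R'
  proof -
    have "(\<Sum>q\<in>QIs T. size (Q' q)) \<le> (\<Sum>q\<in>QIs T. size (Qd q))"
      using that assms(2) phase1_class_maximal unfolding is_solution_def by (intro sum_mono) blast
    moreover have "size T = (\<Sum>q\<in>QIs T. size (Qd q)) + size Rd"
      using T by (metis size_union size_multiset_sum)
    ultimately show ?thesis using size_solution_ge[OF that] by linarith
  qed
  then show ?thesis using sol OPT_eqI by metis
qed

end
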